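(* Let $(A,[-,-,-],\varepsilon)$ be a ternary Leibniz color algebra. Then $A\otimes A$, graded by $(A\otimes A)_c=\bigoplus_{a+b=c}A_a\otimes A_b$, is a Leibniz color algebra with the bracket defined on homogeneous tensors by $$[x\otimes y,\,x'\otimes y']:=x\otimes[y,x',y']+\varepsilon(y,x'+y')\,[x,x',y']\otimes y$$ and extended bilinearly.
   Context: $G$ is an abelian group, $\mathbb{K}$ a field of characteristic $\neq 2$, $\mathcal{H}(V)$ the homogeneous elements of a $G$-graded space $V$; even maps preserve degree. A skew-symmetric bicharacter $\varepsilon:G\times G\to\mathbb{K}^*$ satisfies $\varepsilon(a,b)\varepsilon(b,a)=1$, $\varepsilon(a,b+c)=\varepsilon(a,b)\varepsilon(a,c)$, $\varepsilon(a+b,c)=\varepsilon(a,c)\varepsilon(b,c)$; $\varepsilon(x,y)$ means $\varepsilon$ of the degrees. A Leibniz color algebra is a $G$-graded space with an even bilinear $[-,-]$ such that $[[x,y],z]=[x,[y,z]]+\varepsilon(y,z)[[x,z],y]$ for homogeneous $x,y,z$. A ternary Leibniz color algebra is a $G$-graded space with such $\varepsilon$ and an even trilinear $[-,-,-]$ satisfying $[[x,y,z],t,u]=[x,y,[z,t,u]]+\varepsilon(z,t+u)[x,[y,t,u],z]+\varepsilon(y+z,t+u)[[x,t,u],y,z]$ for all homogeneous $x,y,z,t,u$. *)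

theory Defs
  imports Complex_Main "HOL-Library.Function_Algebras"
begin

definition graded_space :: "('k::field \<Rightarrow> 'v::ab_group_add \<Rightarrow> 'v) \<Rightarrow> ('g \<Rightarrow> 'v set) \<Rightarrow> bool" where
  "graded_space s V \<longleftrightarrow> vector_space s
     \<and> (\<forall>g. module.subspace s (V g))
     \<and> (\<forall>x. \<exists>!f. finite {g. f g \<noteq> 0} \<and> (\<forall>g. f g \<in> V g) \<and> x = (\<Sum>g\<in>{g. f g \<noteq> 0}. f g))"

definition skew_bicharacter :: "('g::ab_group_add \<Rightarrow> 'g \<Rightarrow> 'k::field) \<Rightarrow> bool" where
  "skew_bicharacter \<epsilon> \<longleftrightarrow> (\<forall>a b. \<epsilon> a b \<noteq> 0)
     \<and> (\<forall>a b. \<epsilon> a b * \<epsilon> b a = 1)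
     \<and> (\<forall>a b c. \<epsilon> a (b + c) = \<epsilon> a b * \<epsilon> a c)
     \<and> (\<forall>a b c. \<epsilon> (a + b) c = \<epsilon> a c * \<epsilon> b c)"

definition bilinear_map :: "('k::field \<Rightarrow> 'v::ab_group_add \<Rightarrow> 'v) \<Rightarrow> ('k \<Rightarrow> 'w::ab_group_add \<Rightarrow> 'w)
     \<Rightarrow> ('v \<Rightarrow> 'v \<Rightarrow> 'w) \<Rightarrow> bool" where
  "bilinear_map s t f \<longleftrightarrow> (\<forall>x. Vector_Spaces.linear s t (f x)) \<and> (\<forall>y. Vector_Spaces.linear s t (\<lambda>x. f x y))"

definition trilinear_map :: "('k::field \<Rightarrow> 'v::ab_group_add \<Rightarrow> 'v) \<Rightarrow> ('v \<Rightarrow> 'v \<Rightarrow> 'v \<Rightarrow> 'v) \<Rightarrow> bool" where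
  "trilinear_map s f \<longleftrightarrow> (\<forall>y z. Vector_Spaces.linear s s (\<lambda>x. f x y z))
     \<and> (\<forall>x z. Vector_Spaces.linear s s (\<lambda>y. f x y z)) \<and> (\<forall>x y. Vector_Spaces.linear s s (f x y))"

definition leibniz_color_algebra :: "('k::field \<Rightarrow> 'v::ab_group_add \<Rightarrow> 'v) \<Rightarrow> ('g::ab_group_add \<Rightarrow> 'v set)
     \<Rightarrow> ('g \<Rightarrow> 'g \<Rightarrow> 'k) \<Rightarrow> ('v \<Rightarrow> 'v \<Rightarrow> 'v) \<Rightarrow> bool" where
  "leibniz_color_algebra s V \<epsilon> br \<longleftrightarrow> graded_space s V \<and> skew_bicharacter \<epsilon>
     \<and> bilinear_map s s br
     \<and> (\<forall>a b x y. x \<in> V a \<longrightarrow> y \<in> V b \<longrightarrow> br x y \<in> V (a + b))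
     \<and> (\<forall>a b c x y z. x \<in> V a \<longrightarrow> y \<in> V b \<longrightarrow> z \<in> V c \<longrightarrow>
          br (br x y) z = br x (br y z) + s (\<epsilon> b c) (br (br x z) y))"

definition ternary_leibniz_color_algebra :: "('k::field \<Rightarrow> 'v::ab_group_add \<Rightarrow> 'v) \<Rightarrow> ('g::ab_group_add \<Rightarrow> 'v set)
     \<Rightarrow> ('g \<Rightarrow> 'g \<Rightarrow> 'k) \<Rightarrow> ('v \<Rightarrow> 'v \<Rightarrow> 'v \<Rightarrow> 'v) \<Rightarrow> bool" where
  "ternary_leibniz_color_algebra s V \<epsilon> tb \<longleftrightarrow> graded_space s V \<and> skew_bicharacter \<epsilon>
     \<and> trilinear_map s tb
     \<and> (\<forall>a b c x y z. x \<in> V a \<longrightarrow> y \<in> V b \<longrightarrow> z \<in> V c \<longrightarrow> tb x y z \<in> V (a + b + c))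
     \<and> (\<forall>a b c d e x y z t u. x \<in> V a \<longrightarrow> y \<in> V b \<longrightarrow> z \<in> V c \<longrightarrow> t \<in> V d \<longrightarrow> u \<in> V e \<longrightarrow>
          tb (tb x y z) t u = tb x y (tb z t u) + s (\<epsilon> c (d + e)) (tb x (tb y t u) z)
                              + s (\<epsilon> (b + c) (d + e)) (tb (tb x t u) y z))"

text \<open>Tensor product of a vector space with itself, via the standard construction:
  the free vector space on pairs modulo the bilinearity relations. (T, tensor) is a
  tensor product of A with itself iff the induced linear map from the free vector space
  onto T is surjective with kernel exactly the span of the bilinearity relations.\<close>
definition free_delta :: "'a \<Rightarrow> 'a \<Rightarrow> ('a \<times> 'a \<Rightarrow> 'k::field)" where
  "free_delta x y = (\<lambda>q. if q = (x, y) then 1 else 0)"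

definition free_scale :: "'k::field \<Rightarrow> ('a \<times> 'a \<Rightarrow> 'k) \<Rightarrow> ('a \<times> 'a \<Rightarrow> 'k)" where
  "free_scale c f = (\<lambda>q. c * f q)"

definition bilin_relations :: "('k::field \<Rightarrow> 'a::ab_group_add \<Rightarrow> 'a) \<Rightarrow> ('a \<times> 'a \<Rightarrow> 'k) set" where
  "bilin_relations s =
     {free_delta (x + x') y - free_delta x y - free_delta x' y | x x' y. True}
   \<union> {free_delta x (y + y') - free_delta x y - free_delta x y' | x y y'. True}
   \<union> {free_delta (s c x) y - free_scale c (free_delta x y) | c x y. True}
   \<union> {free_delta x (s c y) - free_scale c (free_delta x y) | c x y. True}"

definition induced_map :: "('k::field \<Rightarrow> 't::ab_group_add \<Rightarrow> 't) \<Rightarrow> ('a \<Rightarrow> 'a \<Rightarrow> 't)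
     \<Rightarrow> ('a \<times> 'a \<Rightarrow> 'k) \<Rightarrow> 't" where
  "induced_map sT tensor f = (\<Sum>q\<in>{q. f q \<noteq> 0}. sT (f q) (tensor (fst q) (snd q)))"

definition is_tensor_square :: "('k::field \<Rightarrow> 'a::ab_group_add \<Rightarrow> 'a) \<Rightarrow> ('k \<Rightarrow> 't::ab_group_add \<Rightarrow> 't)
     \<Rightarrow> ('a \<Rightarrow> 'a \<Rightarrow> 't) \<Rightarrow> bool" where
  "is_tensor_square sA sT tensor \<longleftrightarrow>
     vector_space sA \<and> vector_space sT
     \<and> (\<forall>t. \<exists>f. finite {q. f q \<noteq> 0} \<and> t = induced_map sT tensor f)
     \<and> (\<forall>f. finite {q. f q \<noteq> 0} \<longrightarrow>
          (induced_map sT tensor f = 0 \<longleftrightarrow> f \<in> module.span free_scale (bilin_relations sA)))"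

definition tensor_grading :: "('k::field \<Rightarrow> 't::ab_group_add \<Rightarrow> 't) \<Rightarrow> ('a \<Rightarrow> 'a \<Rightarrow> 't)
     \<Rightarrow> ('g::ab_group_add \<Rightarrow> 'a set) \<Rightarrow> 'g \<Rightarrow> 't set" where
  "tensor_grading sT tensor V c =
     module.span sT {tensor x y | x y a b. x \<in> V a \<and> y \<in> V b \<and> a + b = c}"

end

theory Submission
  imports Defs
begin

text \<open>
  The bracket is produced by the universal property of the tensor square, applied twice. For fixed
  \<open>x'\<close>, \<open>y'\<close> the prescribed value on \<open>x \<otimes> y\<close> is bilinear in \<open>(x, y)\<close> once the sign
  \<open>\<epsilon>(y, x' + y')\<close> is absorbed into a linear operator acting degreewise; it lifts to a linear map
  of the first argument, which in turn depends bilinearly on \<open>(x', y')\<close> and lifts again. The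
  grading of \<open>A \<otimes> A\<close> is a direct sum because its projections are lifts of bilinear maps as well.
  Both the degree condition and the Leibniz identity are (tri)linear, so they need only be checked
  on homogeneous pure tensors. There the ternary identity expands both sides of the Leibniz
  identity into the same eight tensors, and the bicharacter laws match their signs.
\<close>

section \<open>Multilinear maps on spans\<close>

lemma bilinear_map_iff:
  assumes "vector_space s" "vector_space t"
  shows "bilinear_map s t f \<longleftrightarrow>
     (\<forall>x x' y. f (x + x') y = f x y + f x' y) \<and> (\<forall>x y y'. f x (y + y') = f x y + f x y')
     \<and> (\<forall>c x y. f (s c x) y = t c (f x y)) \<and> (\<forall>c x y. f x (s c y) = t c (f x y))"
  using assms by (auto simp: bilinear_map_def Vector_Spaces.linear_iff)

context vector_space
begin

lemma linear_vanishes_on_span: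
  assumes "Vector_Spaces.linear scale scale f" "\<And>x. x \<in> B \<Longrightarrow> f x = 0" "x \<in> span B"
  shows "f x = 0"
proof -
  interpret Vector_Spaces.linear scale scale f by fact
  show ?thesis using eq_0_on_span assms(2,3) by blast
qed

lemma trilinear_eq_0_on_span:
  assumes F: "trilinear_map scale F"
    and gen: "\<And>x y z. x \<in> A \<Longrightarrow> y \<in> B \<Longrightarrow> z \<in> C \<Longrightarrow> F x y z = 0"
    and "x \<in> span A" "y \<in> span B" "z \<in> span C"
  shows "F x y z = 0"
proof -
  have "F x y z = 0" if "x \<in> A" "y \<in> B" "z \<in> span C" for x y z
    using linear_vanishes_on_span[of "F x y" C z] F gen that by (auto simp: trilinear_map_def)
  then have "F x y z = 0" if "x \<in> A" "y \<in> span B" "z \<in> span C" for x y z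
    using linear_vanishes_on_span[of "\<lambda>y. F x y z" B y] F that by (auto simp: trilinear_map_def)
  then show ?thesis
    using linear_vanishes_on_span[of "\<lambda>x. F x y z" A x] F assms(3-5) by (auto simp: trilinear_map_def)
qed

lemma bilinear_map_span_subspace:
  assumes f: "bilinear_map scale scale f" and W: "subspace W"
    and gen: "\<And>x y. x \<in> A \<Longrightarrow> y \<in> B \<Longrightarrow> f x y \<in> W"
    and "x \<in> span A" "y \<in> span B"
  shows "f x y \<in> W"
proof -
  have preimage: "subspace {u. g u \<in> W}" if "Vector_Spaces.linear scale scale g" for g
  proof -
    interpret Vector_Spaces.linear scale scale g by fact
    show ?thesis using subspace_linear_preimage[OF W] .
  qed
  have "f x y \<in> W" if "x \<in> A" "y \<in> span B" for x y
    using span_induct[OF that(2) preimage] f gen that(1) by (auto simp: bilinear_map_def)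
  then show ?thesis
    using span_induct[OF assms(4) preimage, of "\<lambda>x. f x y"] f assms(5) by (auto simp: bilinear_map_def)
qed

end

section \<open>Free vector spaces and the tensor square\<close>

lemma finite_support_free_delta: "finite {q. free_delta x y q \<noteq> (0::'k::field)}"
  by (rule finite_subset[of _ "{(x, y)}"]) (auto simp: free_delta_def)

lemma finite_support_add:
  "finite {q. f q \<noteq> (0::'k::ab_group_add)} \<Longrightarrow> finite {q. g q \<noteq> 0} \<Longrightarrow> finite {q. (f + g) q \<noteq> 0}"
  by (rule finite_subset[of _ "{q. f q \<noteq> 0} \<union> {q. g q \<noteq> 0}"]) auto

lemma finite_support_diff:
  "finite {q. f q \<noteq> (0::'k::ab_group_add)} \<Longrightarrow> finite {q. g q \<noteq> 0} \<Longrightarrow> finite {q. (f - g) q \<noteq> 0}"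
  by (rule finite_subset[of _ "{q. f q \<noteq> 0} \<union> {q. g q \<noteq> 0}"]) auto

lemma finite_support_free_scale:
  "finite {q. f q \<noteq> (0::'k::field)} \<Longrightarrow> finite {q. free_scale c f q \<noteq> 0}"
  by (rule finite_subset[of _ "{q. f q \<noteq> 0}"]) (auto simp: free_scale_def)

lemma finite_support_bilin_relation: "r \<in> bilin_relations s \<Longrightarrow> finite {q. r q \<noteq> (0::'k::field)}"
  unfolding bilin_relations_def
  by (auto intro!: finite_support_diff finite_support_free_delta finite_support_free_scale)

lemma module_free_scale: "module (free_scale :: 'k::field \<Rightarrow> ('q \<times> 'q \<Rightarrow> 'k) \<Rightarrow> _)"
  by unfold_locales (auto simp: free_scale_def fun_eq_iff algebra_simps)

context vector_space
begin

lemma induced_map_superset: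
  assumes "finite S" "{q. f q \<noteq> 0} \<subseteq> S"
  shows "induced_map scale \<phi> f = (\<Sum>q\<in>S. f q *s \<phi> (fst q) (snd q))"
  unfolding induced_map_def by (rule sum.mono_neutral_left) (use assms in auto)

lemma induced_map_add:
  assumes "finite {q. f q \<noteq> 0}" "finite {q. g q \<noteq> 0}"
  shows "induced_map scale \<phi> (f + g) = induced_map scale \<phi> f + induced_map scale \<phi> g"
proof -
  let ?S = "{q. f q \<noteq> 0} \<union> {q. g q \<noteq> 0}"
  have S: "finite ?S" using assms by auto
  have "induced_map scale \<phi> (f + g) = (\<Sum>q\<in>?S. (f + g) q *s \<phi> (fst q) (snd q))"
    by (rule induced_map_superset) (use S in auto)
  also have "\<dots> = (\<Sum>q\<in>?S. f q *s \<phi> (fst q) (snd q)) + (\<Sum>q\<in>?S. g q *s \<phi> (fst q) (snd q))"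
    by (simp add: scale_left_distrib sum.distrib)
  also have "\<dots> = induced_map scale \<phi> f + induced_map scale \<phi> g"
    by (subst (1 2) induced_map_superset[of ?S]) (use S in auto)
  finally show ?thesis .
qed

lemma induced_map_diff:
  assumes "finite {q. f q \<noteq> 0}" "finite {q. g q \<noteq> 0}"
  shows "induced_map scale \<phi> (f - g) = induced_map scale \<phi> f - induced_map scale \<phi> g"
  using induced_map_add[OF finite_support_diff[OF assms] assms(2), of \<phi>] by (metis diff_add_cancel eq_diff_eq)

lemma induced_map_free_scale:
  assumes "finite {q. f q \<noteq> 0}"
  shows "induced_map scale \<phi> (free_scale c f) = c *s induced_map scale \<phi> f"
proof -
  have "induced_map scale \<phi> (free_scale c f) = (\<Sum>q\<in>{q. f q \<noteq> 0}. free_scale c f q *s \<phi> (fst q) (snd q))"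
    by (rule induced_map_superset) (use assms in \<open>auto simp: free_scale_def\<close>)
  then show ?thesis by (simp add: induced_map_def free_scale_def scale_sum_right)
qed

lemma induced_map_free_delta: "induced_map scale \<phi> (free_delta x y) = \<phi> x y"
proof -
  have "{q. free_delta x y q \<noteq> (0::'a)} = {(x, y)}" by (auto simp: free_delta_def)
  then show ?thesis by (simp add: induced_map_def free_delta_def)
qed

lemma induced_map_add_map:
  "induced_map scale (\<lambda>x y. \<phi> x y + \<psi> x y) f = induced_map scale \<phi> f + induced_map scale \<psi> f"
  by (simp add: induced_map_def scale_right_distrib sum.distrib)

lemma induced_map_scale_map:
  "induced_map scale (\<lambda>x y. c *s \<phi> x y) f = c *s induced_map scale \<phi> f"
  by (simp add: induced_map_def scale_sum_right mult.commute)

lemma bilinear_map_iff_relations_vanish: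
  assumes "vector_space sA"
  shows "bilinear_map sA scale \<phi> \<longleftrightarrow> (\<forall>r\<in>bilin_relations sA. induced_map scale \<phi> r = 0)"
proof -
  have three: "induced_map scale \<phi> (free_delta a b - free_delta c d - free_delta e f)
      = \<phi> a b - \<phi> c d - \<phi> e f" for a b c d e f
    by (simp only: induced_map_diff finite_support_diff finite_support_free_delta induced_map_free_delta)
  have two: "induced_map scale \<phi> (free_delta a b - free_scale k (free_delta c d)) = \<phi> a b - k *s \<phi> c d"
    for a b c d k
    by (simp only: induced_map_diff finite_support_free_scale finite_support_free_delta
        induced_map_free_scale induced_map_free_delta)
  show ?thesis
  proof
    assume "bilinear_map sA scale \<phi>"
    then show "\<forall>r\<in>bilin_relations sA. induced_map scale \<phi> r = 0"
      unfolding bilinear_map_iff[OF assms vector_space_axioms] bilin_relations_def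
      by (auto simp: three two)
  next
    assume vanish: "\<forall>r\<in>bilin_relations sA. induced_map scale \<phi> r = 0"
    have "\<phi> (x + x') y - \<phi> x y - \<phi> x' y = 0" "\<phi> x (y + y') - \<phi> x y - \<phi> x y' = 0"
      "\<phi> (sA c x) y - c *s \<phi> x y = 0" "\<phi> x (sA c y) - c *s \<phi> x y = 0" for x x' y y' c
      using vanish unfolding bilin_relations_def by (fastforce simp: three[symmetric] two[symmetric])+
    then show "bilinear_map sA scale \<phi>"
      unfolding bilinear_map_iff[OF assms vector_space_axioms] by (simp add: algebra_simps)
  qed
qed

end

lemma (in vector_space) induced_map_bilin_relations_span:
  assumes "vector_space sA" "bilinear_map sA scale \<phi>"
    and "r \<in> module.span free_scale (bilin_relations sA)"
  shows "induced_map scale \<phi> r = 0"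
proof -
  have vanish: "induced_map scale \<phi> r' = 0" if "r' \<in> bilin_relations sA" for r'
    using that assms(2) bilinear_map_iff_relations_vanish[OF assms(1)] by blast
  have "finite {q. r q \<noteq> 0} \<and> induced_map scale \<phi> r = 0"
  proof (rule module.span_induct_alt[OF module_free_scale assms(3)])
    fix c r' r
    assume r': "r' \<in> bilin_relations sA" and IH: "finite {q. r q \<noteq> 0} \<and> induced_map scale \<phi> r = 0"
    note fin_r' = finite_support_free_scale[OF finite_support_bilin_relation[OF r'], of c]
    show "finite {q. (free_scale c r' + r) q \<noteq> 0} \<and> induced_map scale \<phi> (free_scale c r' + r) = 0"
      using finite_support_add[OF fin_r'] IH induced_map_add[OF fin_r']
        induced_map_free_scale[OF finite_support_bilin_relation[OF r']] vanish[OF r']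
      by simp
  qed (simp add: induced_map_def)
  then show ?thesis ..
qed

locale tensor_square =
  fixes sA :: "'k::field \<Rightarrow> 'a::ab_group_add \<Rightarrow> 'a" and sT :: "'k \<Rightarrow> 't::ab_group_add \<Rightarrow> 't"
    and tensor :: "'a \<Rightarrow> 'a \<Rightarrow> 't"
  assumes is_tensor_square: "is_tensor_square sA sT tensor"
begin

sublocale A: vector_space sA using is_tensor_square by (simp add: is_tensor_square_def)
sublocale T: vector_space sT using is_tensor_square by (simp add: is_tensor_square_def)

lemma bilinear_tensor: "bilinear_map sA sT tensor"
  unfolding T.bilinear_map_iff_relations_vanish[OF A.vector_space_axioms]
  using is_tensor_square finite_support_bilin_relation
  by (meson is_tensor_square_def module.span_base module_free_scale)

lemma tensor_add_left: "tensor (x + x') y = tensor x y + tensor x' y"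
  and tensor_add_right: "tensor x (y + y') = tensor x y + tensor x y'"
  and tensor_scale_left: "tensor (sA c x) y = sT c (tensor x y)"
  and tensor_scale_right: "tensor x (sA c y) = sT c (tensor x y)"
  using bilinear_tensor
  unfolding bilinear_map_iff[OF A.vector_space_axioms T.vector_space_axioms] by blast+

lemma tensor_zero_left: "tensor 0 y = 0"
  and tensor_zero_right: "tensor x 0 = 0"
  using tensor_add_left[of 0 0 y] tensor_add_right[of x 0 0] by simp_all

lemma tensor_sum_left: "tensor (\<Sum>i\<in>I. f i) y = (\<Sum>i\<in>I. tensor (f i) y)"
  by (induction I rule: infinite_finite_induct) (simp_all add: tensor_zero_left tensor_add_left)

lemma tensor_sum_right: "tensor x (\<Sum>i\<in>I. f i) = (\<Sum>i\<in>I. tensor x (f i))"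
  by (induction I rule: infinite_finite_induct) (simp_all add: tensor_zero_right tensor_add_right)

definition tensor_coords :: "'t \<Rightarrow> ('a \<times> 'a \<Rightarrow> 'k)" where
  "tensor_coords t = (SOME f. finite {q. f q \<noteq> 0} \<and> t = induced_map sT tensor f)"

text \<open>Independent of the chosen coordinates: two coordinate vectors of the same tensor differ by an
  element of the span of the bilinearity relations, which every bilinear map kills.\<close>
definition tensor_lift :: "('a \<Rightarrow> 'a \<Rightarrow> 't) \<Rightarrow> 't \<Rightarrow> 't" where
  "tensor_lift \<phi> t = induced_map sT \<phi> (tensor_coords t)"

lemma finite_support_tensor_coords: "finite {q. tensor_coords t q \<noteq> 0}"
  and induced_map_tensor_coords: "induced_map sT tensor (tensor_coords t) = t"
proof -
  have "\<exists>f. finite {q. f q \<noteq> 0} \<and> t = induced_map sT tensor f"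
    using is_tensor_square by (simp add: is_tensor_square_def)
  then have "finite {q. tensor_coords t q \<noteq> 0} \<and> t = induced_map sT tensor (tensor_coords t)"
    unfolding tensor_coords_def by (rule someI_ex)
  then show "finite {q. tensor_coords t q \<noteq> 0}" "induced_map sT tensor (tensor_coords t) = t"
    by simp_all
qed

lemma tensor_lift_induced_map:
  assumes \<phi>: "bilinear_map sA sT \<phi>" and f: "finite {q. f q \<noteq> 0}"
  shows "tensor_lift \<phi> (induced_map sT tensor f) = induced_map sT \<phi> f"
proof -
  let ?g = "tensor_coords (induced_map sT tensor f)"
  have g: "finite {q. ?g q \<noteq> 0}"
    by (rule finite_support_tensor_coords)
  have "induced_map sT tensor (?g - f) = 0"
    using f g by (simp add: T.induced_map_diff induced_map_tensor_coords)
  then have "?g - f \<in> module.span free_scale (bilin_relations sA)"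
    using is_tensor_square finite_support_diff[OF g f] by (simp add: is_tensor_square_def)
  then have "induced_map sT \<phi> (?g - f) = 0"
    by (rule T.induced_map_bilin_relations_span[OF A.vector_space_axioms \<phi>])
  then show ?thesis
    using g f by (simp add: T.induced_map_diff tensor_lift_def)
qed

lemma tensor_lift_tensor: "bilinear_map sA sT \<phi> \<Longrightarrow> tensor_lift \<phi> (tensor x y) = \<phi> x y"
  using tensor_lift_induced_map[of \<phi> "free_delta x y"]
  by (simp add: finite_support_free_delta T.induced_map_free_delta)

lemma linear_tensor_lift:
  assumes \<phi>: "bilinear_map sA sT \<phi>"
  shows "Vector_Spaces.linear sT sT (tensor_lift \<phi>)"
proof -
  note fin = finite_support_tensor_coords
  have "tensor_lift \<phi> (t + t') = tensor_lift \<phi> t + tensor_lift \<phi> t'" for t t'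
  proof -
    have "t + t' = induced_map sT tensor (tensor_coords t + tensor_coords t')"
      by (simp only: T.induced_map_add[OF fin fin] induced_map_tensor_coords)
    then have "tensor_lift \<phi> (t + t') = induced_map sT \<phi> (tensor_coords t + tensor_coords t')"
      using tensor_lift_induced_map[OF \<phi> finite_support_add[OF fin fin]] by metis
    then show ?thesis
      by (simp only: T.induced_map_add[OF fin fin] tensor_lift_def)
  qed
  moreover have "tensor_lift \<phi> (sT c t) = sT c (tensor_lift \<phi> t)" for c t
  proof -
    have "sT c t = induced_map sT tensor (free_scale c (tensor_coords t))"
      by (simp only: T.induced_map_free_scale[OF fin] induced_map_tensor_coords)
    then have "tensor_lift \<phi> (sT c t) = induced_map sT \<phi> (free_scale c (tensor_coords t))"
      using tensor_lift_induced_map[OF \<phi> finite_support_free_scale[OF fin]] by metis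
    then show ?thesis
      by (simp only: T.induced_map_free_scale[OF fin] tensor_lift_def)
  qed
  ultimately show ?thesis
    by (simp add: Vector_Spaces.linear_iff T.vector_space_axioms)
qed

lemma tensor_lift_add: "tensor_lift \<phi> (t + t') = tensor_lift \<phi> t + tensor_lift \<phi> t'"
  and tensor_lift_scale: "tensor_lift \<phi> (sT c t) = sT c (tensor_lift \<phi> t)"
  if "bilinear_map sA sT \<phi>"
  using linear_tensor_lift[OF that] by (simp_all add: Vector_Spaces.linear_iff)

lemma tensor_lift_add_map: "tensor_lift (\<lambda>x y. \<phi> x y + \<psi> x y) t = tensor_lift \<phi> t + tensor_lift \<psi> t"
  and tensor_lift_scale_map: "tensor_lift (\<lambda>x y. sT c (\<phi> x y)) t = sT c (tensor_lift \<phi> t)"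
  by (simp_all add: tensor_lift_def T.induced_map_add_map T.induced_map_scale_map)

lemma tensor_span: "t \<in> T.span {tensor x y | x y. True}"
proof -
  have "induced_map sT tensor (tensor_coords t) \<in> T.span {tensor x y | x y. True}"
    unfolding induced_map_def by (intro T.span_sum T.span_scale T.span_base) auto
  then show ?thesis by (simp add: induced_map_tensor_coords)
qed

end

section \<open>Graded vector spaces\<close>

locale graded =
  fixes sA :: "'k::field \<Rightarrow> 'a::ab_group_add \<Rightarrow> 'a" and V :: "'g \<Rightarrow> 'a set"
  assumes graded_space: "graded_space sA V"
begin

sublocale A: vector_space sA using graded_space by (simp add: graded_space_def)

lemma subspace_V: "A.subspace (V g)"
  using graded_space by (simp add: graded_space_def)

definition decomposition :: "('g \<Rightarrow> 'a) \<Rightarrow> 'a \<Rightarrow> bool" where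
  "decomposition f x \<longleftrightarrow> finite {g. f g \<noteq> 0} \<and> (\<forall>g. f g \<in> V g) \<and> x = (\<Sum>g\<in>{g. f g \<noteq> 0}. f g)"

definition component :: "'g \<Rightarrow> 'a \<Rightarrow> 'a" where
  "component g x = (THE f. decomposition f x) g"

lemma decomposition_unique: "\<exists>!f. decomposition f x"
  using graded_space unfolding graded_space_def decomposition_def by blast

lemma component_unique: "decomposition f x \<Longrightarrow> component g x = f g"
  unfolding component_def by (simp add: the1_equality[OF decomposition_unique])

lemma decomposition_component: "decomposition (\<lambda>g. component g x) x"
  using theI'[OF decomposition_unique] by (simp add: component_def[abs_def])

lemma finite_components: "finite {g. component g x \<noteq> 0}"
  and component_in: "component g x \<in> V g"
  and sum_components: "(\<Sum>g\<in>{g. component g x \<noteq> 0}. component g x) = x"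
  using decomposition_component[of x] unfolding decomposition_def by auto

lemma sum_components_superset:
  assumes "finite S" "{g. component g x \<noteq> 0} \<subseteq> S"
  shows "(\<Sum>g\<in>S. component g x) = x"
  using sum.mono_neutral_left[OF assms(1,2)] sum_components[of x] by fastforce

lemma component_add: "component g (x + y) = component g x + component g y"
proof (rule component_unique)
  let ?S = "{g. component g x \<noteq> 0} \<union> {g. component g y \<noteq> 0}"
  have S: "finite ?S" using finite_components by auto
  have "(\<Sum>g | component g x + component g y \<noteq> 0. component g x + component g y)
      = (\<Sum>g\<in>?S. component g x + component g y)"
    by (rule sum.mono_neutral_left) (use S in auto)
  also have "\<dots> = x + y"
    using S by (simp add: sum.distrib sum_components_superset)
  moreover have "finite {g. component g x + component g y \<noteq> 0}"
    by (rule finite_subset[OF _ S]) auto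
  ultimately show "decomposition (\<lambda>g. component g x + component g y) (x + y)"
    unfolding decomposition_def
    using A.subspace_add[OF subspace_V component_in component_in] by simp
qed

lemma component_scale: "component g (sA c x) = sA c (component g x)"
proof (rule component_unique)
  let ?S = "{g. component g x \<noteq> 0}"
  have "(\<Sum>g | sA c (component g x) \<noteq> 0. sA c (component g x)) = (\<Sum>g\<in>?S. sA c (component g x))"
    by (rule sum.mono_neutral_left) (use finite_components in auto)
  also have "\<dots> = sA c x"
    by (simp add: A.scale_sum_right[symmetric] sum_components)
  moreover have "finite {g. sA c (component g x) \<noteq> 0}"
    by (rule finite_subset[OF _ finite_components[of x]]) auto
  ultimately show "decomposition (\<lambda>g. sA c (component g x)) (sA c x)"
    unfolding decomposition_def
    using A.subspace_scale[OF subspace_V component_in] by simp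
qed

lemma component_homogeneous: "x \<in> V a \<Longrightarrow> component g x = (if g = a then x else 0)"
  by (rule component_unique)
     (auto simp: decomposition_def Collect_conv_if A.subspace_0[OF subspace_V])

definition degreewise :: "('g \<Rightarrow> 'a \<Rightarrow> 'b::comm_monoid_add) \<Rightarrow> 'a \<Rightarrow> 'b" where
  "degreewise F x = (\<Sum>g\<in>{g. component g x \<noteq> 0}. F g (component g x))"

lemma degreewise_superset:
  assumes "finite S" "{g. component g x \<noteq> 0} \<subseteq> S" "\<And>g. F g 0 = 0"
  shows "degreewise F x = (\<Sum>g\<in>S. F g (component g x))"
  unfolding degreewise_def by (rule sum.mono_neutral_left) (use assms in auto)

lemma degreewise_homogeneous:
  assumes "x \<in> V a" "\<And>g. F g 0 = 0"
  shows "degreewise F x = F a x"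
proof -
  have "{g. component g x \<noteq> 0} \<subseteq> {a}"
    by (auto simp: component_homogeneous[OF assms(1)])
  then show ?thesis
    using degreewise_superset[of "{a}" x F] assms by (simp add: component_homogeneous)
qed

lemma degreewise_add:
  assumes "\<And>g u v. F g (u + v) = F g u + (F g v :: 'b::ab_group_add)"
  shows "degreewise F (x + y) = degreewise F x + degreewise F y"
proof -
  let ?S = "{g. component g x \<noteq> 0} \<union> {g. component g y \<noteq> 0}"
  have S: "finite ?S" using finite_components by auto
  have F0: "F g 0 = 0" for g using assms[of g 0 0] by simp
  have "degreewise F (x + y) = (\<Sum>g\<in>?S. F g (component g x)) + (\<Sum>g\<in>?S. F g (component g y))"
    by (subst degreewise_superset[of ?S]) (use S F0 in \<open>auto simp: component_add assms sum.distrib\<close>)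
  then show ?thesis
    by (subst (1 2) degreewise_superset[of ?S]) (use S F0 in auto)
qed

lemma degreewise_scale:
  assumes "vector_space s" "\<And>g u. F g (sA c u) = s c (F g u)" "\<And>g. F g 0 = 0"
  shows "degreewise F (sA c x) = s c (degreewise F x)"
proof -
  interpret S: vector_space s by fact
  have "degreewise F (sA c x) = (\<Sum>g\<in>{g. component g x \<noteq> 0}. F g (component g (sA c x)))"
    by (rule degreewise_superset) (use finite_components assms(3) in \<open>auto simp: component_scale\<close>)
  then show ?thesis
    by (simp add: component_scale assms(2) S.scale_sum_right degreewise_def)
qed

lemma degreewise_add_maps:
  "degreewise (\<lambda>g u. F g u + G g u) x = degreewise F x + degreewise G x"
  by (simp add: degreewise_def sum.distrib)

lemma degreewise_scale_maps:
  assumes "vector_space s"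
  shows "degreewise (\<lambda>g u. s c (F g u)) x = s c (degreewise F x)"
proof -
  interpret S: vector_space s by fact
  show ?thesis by (simp add: degreewise_def S.scale_sum_right)
qed

lemma degreewise_zero_maps: "degreewise (\<lambda>g u. 0) x = 0"
  by (simp add: degreewise_def)

lemma bilinear_degreewise:
  assumes s: "vector_space s" and F: "\<And>a b. bilinear_map sA s (F a b)"
  shows "bilinear_map sA s (\<lambda>x y. degreewise (\<lambda>a u. degreewise (\<lambda>b v. F a b u v) y) x)"
proof -
  have add_left: "F a b (u + u') v = F a b u v + F a b u' v"
    and add_right: "F a b u (v + v') = F a b u v + F a b u v'"
    and scale_left: "F a b (sA k u) v = s k (F a b u v)"
    and scale_right: "F a b u (sA k v) = s k (F a b u v)" for a b u u' v v' k
    using F[of a b] unfolding bilinear_map_iff[OF A.vector_space_axioms s] by blast+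
  have zero_left: "F a b 0 v = 0" and zero_right: "F a b u 0 = 0" for a b u v
    using add_left[of a b 0 0 v] add_right[of a b u 0 0] by simp_all
  show ?thesis
    unfolding bilinear_map_iff[OF A.vector_space_axioms s]
  proof (intro conjI allI)
    interpret S: vector_space s by fact
    fix x x' y y' k
    show "degreewise (\<lambda>a u. degreewise (\<lambda>b. F a b u) y) (x + x')
      = degreewise (\<lambda>a u. degreewise (\<lambda>b. F a b u) y) x + degreewise (\<lambda>a u. degreewise (\<lambda>b. F a b u) y) x'"
      by (rule degreewise_add) (simp add: degreewise_def add_left sum.distrib)
    show "degreewise (\<lambda>a u. degreewise (\<lambda>b. F a b u) (y + y')) x
      = degreewise (\<lambda>a u. degreewise (\<lambda>b. F a b u) y) x + degreewise (\<lambda>a u. degreewise (\<lambda>b. F a b u) y') x"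
      by (subst degreewise_add, simp add: add_right) (rule degreewise_add_maps)
    show "degreewise (\<lambda>a u. degreewise (\<lambda>b. F a b u) y) (sA k x)
      = s k (degreewise (\<lambda>a u. degreewise (\<lambda>b. F a b u) y) x)"
      by (rule degreewise_scale[OF s]) (simp_all add: degreewise_def scale_left zero_left S.scale_sum_right)
    show "degreewise (\<lambda>a u. degreewise (\<lambda>b. F a b u) (sA k y)) x
      = s k (degreewise (\<lambda>a u. degreewise (\<lambda>b. F a b u) y) x)"
      by (subst degreewise_scale[OF s], simp_all add: scale_right zero_right)
        (rule degreewise_scale_maps[OF s])
  qed
qed

end

locale graded_projections = vector_space +
  fixes W :: "'g \<Rightarrow> 'b set" and P :: "'g \<Rightarrow> 'b \<Rightarrow> 'b"
  assumes subspace_W: "\<And>c. subspace (W c)"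
    and linear_P: "\<And>c. Vector_Spaces.linear scale scale (P c)"
    and P_in: "\<And>c t. P c t \<in> W c"
    and P_on: "\<And>c c' w. w \<in> W c' \<Longrightarrow> P c w = (if c = c' then w else 0)"
    and spanning: "\<And>t. t \<in> span (\<Union>c. W c)"
begin

lemma P_add: "P c (x + y) = P c x + P c y"
  and P_scale: "P c (k *s x) = k *s P c x"
  using linear_P[of c] by (simp_all add: Vector_Spaces.linear_iff)

lemma P_zero: "P c 0 = 0"
  using P_add[of c 0 0] by simp

lemma finite_support_P: "finite {c. P c t \<noteq> 0}"
  using spanning[of t]
proof (induction rule: span_induct_alt)
  case base
  then show ?case by (simp add: P_zero)
next
  case (step k x y)
  then obtain c0 where "x \<in> W c0" by blast
  then have "{c. P c (k *s x + y) \<noteq> 0} \<subseteq> insert c0 {c. P c y \<noteq> 0}"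
    by (auto simp: P_add P_scale P_on)
  then show ?case using step.IH finite_subset by blast
qed

lemma sum_P_superset:
  assumes "finite C" "{c. P c t \<noteq> 0} \<subseteq> C"
  shows "t = (\<Sum>c\<in>C. P c t)"
  using spanning[of t] assms
proof (induction arbitrary: C rule: span_induct_alt)
  case base
  then show ?case by (simp add: P_zero)
next
  case (step k x y)
  then obtain c0 where x: "x \<in> W c0" by blast
  define D where "D = C \<union> {c0} \<union> {c. P c y \<noteq> 0}"
  have D: "finite D" "C \<subseteq> D"
    using step.prems(1) finite_support_P by (auto simp: D_def)
  have "(\<Sum>c\<in>C. P c (k *s x + y)) = (\<Sum>c\<in>D. P c (k *s x + y))"
    by (rule sum.mono_neutral_left) (use D step.prems(2) in auto)
  also have "\<dots> = k *s (\<Sum>c\<in>D. P c x) + (\<Sum>c\<in>D. P c y)"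
    by (simp add: P_add P_scale sum.distrib scale_sum_right)
  also have "(\<Sum>c\<in>D. P c x) = x"
    using D(1) by (simp add: P_on[OF x] sum.delta D_def)
  also have "(\<Sum>c\<in>D. P c y) = y"
    by (rule step.IH[symmetric]) (use D(1) in \<open>auto simp: D_def\<close>)
  finally show ?case by simp
qed

lemma P_sum_homogeneous:
  assumes "finite C" "\<And>c. w c \<in> W c"
  shows "P c (\<Sum>c'\<in>C. w c') = (if c \<in> C then w c else 0)"
proof -
  have "P c (\<Sum>c'\<in>C. w c') = (\<Sum>c'\<in>C. P c (w c'))"
    by (induction C rule: infinite_finite_induct) (simp_all add: P_zero P_add)
  also have "\<dots> = (\<Sum>c'\<in>C. if c = c' then w c' else 0)"
    by (simp add: P_on[OF assms(2)])
  finally show ?thesis using assms(1) by simp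
qed

lemma graded_space_W: "graded_space scale W"
  unfolding graded_space_def
proof (intro conjI allI vector_space_axioms subspace_W)
  fix t
  show "\<exists>!F. finite {c. F c \<noteq> 0} \<and> (\<forall>c. F c \<in> W c) \<and> t = (\<Sum>c\<in>{c. F c \<noteq> 0}. F c)"
  proof (rule ex1I)
    show "finite {c. P c t \<noteq> 0} \<and> (\<forall>c. P c t \<in> W c) \<and> t = (\<Sum>c\<in>{c. P c t \<noteq> 0}. P c t)"
      using finite_support_P P_in sum_P_superset by blast
    fix F assume F: "finite {c. F c \<noteq> 0} \<and> (\<forall>c. F c \<in> W c) \<and> t = (\<Sum>c\<in>{c. F c \<noteq> 0}. F c)"
    show "F = (\<lambda>c. P c t)"
    proof
      fix c
      show "F c = P c t"
        using F P_sum_homogeneous[of "{c. F c \<noteq> 0}" F c] by auto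
    qed
  qed
qed

end

section \<open>The grading of the tensor square\<close>

locale graded_tensor_square = graded sA V + tensor_square sA sT tensor
  for sA :: "'k::field \<Rightarrow> 'a::ab_group_add \<Rightarrow> 'a" and V :: "'g::ab_group_add \<Rightarrow> 'a set"
    and sT :: "'k \<Rightarrow> 't::ab_group_add \<Rightarrow> 't" and tensor
begin

abbreviation TV :: "'g \<Rightarrow> 't set" where
  "TV \<equiv> tensor_grading sT tensor V"

lemma subspace_TV: "T.subspace (TV c)"
  by (simp add: tensor_grading_def)

lemma tensor_in_TV: "x \<in> V a \<Longrightarrow> y \<in> V b \<Longrightarrow> tensor x y \<in> TV (a + b)"
  unfolding tensor_grading_def by (rule T.span_base) blast

definition pair_projection :: "'g \<Rightarrow> 'a \<Rightarrow> 'a \<Rightarrow> 't" where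
  "pair_projection c x y =
     degreewise (\<lambda>a u. degreewise (\<lambda>b v. if a + b = c then tensor u v else 0) y) x"

lemma bilinear_pair_projection: "bilinear_map sA sT (pair_projection c)"
  unfolding pair_projection_def[abs_def]
proof (rule bilinear_degreewise[OF T.vector_space_axioms])
  show "bilinear_map sA sT (\<lambda>u v. if a + b = c then tensor u v else 0)" for a b
    unfolding bilinear_map_iff[OF A.vector_space_axioms T.vector_space_axioms]
    by (simp add: tensor_add_left tensor_add_right tensor_scale_left tensor_scale_right)
qed

lemma pair_projection_homogeneous:
  assumes "x \<in> V a" "y \<in> V b"
  shows "pair_projection c x y = (if a + b = c then tensor x y else 0)"
proof -
  have "pair_projection c x y = degreewise (\<lambda>b v. if a + b = c then tensor x v else 0) y"
    unfolding pair_projection_def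
    by (rule degreewise_homogeneous[OF assms(1)]) (simp only: tensor_zero_left if_cancel degreewise_zero_maps)
  also have "\<dots> = (if a + b = c then tensor x y else 0)"
    by (rule degreewise_homogeneous[OF assms(2)]) (simp add: tensor_zero_right)
  finally show ?thesis .
qed

lemma pair_projection_in_TV: "pair_projection c x y \<in> TV c"
  unfolding pair_projection_def degreewise_def
  by (intro T.subspace_sum[OF subspace_TV])
     (auto intro: T.subspace_0[OF subspace_TV] tensor_in_TV[OF component_in component_in])

definition TV_projection :: "'g \<Rightarrow> 't \<Rightarrow> 't" where
  "TV_projection c = tensor_lift (pair_projection c)"

lemma TV_projection_on_TV:
  assumes "w \<in> TV c'"
  shows "TV_projection c w = (if c = c' then w else 0)"
proof -
  define f where "f w = TV_projection c w - (if c = c' then w else 0)" for w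
  have "Vector_Spaces.linear sT sT f"
    using linear_tensor_lift[OF bilinear_pair_projection, of c]
    by (simp add: f_def TV_projection_def Vector_Spaces.linear_iff T.scale_right_diff_distrib)
  moreover have "f w = 0" if "w \<in> {tensor x y | x y a b. x \<in> V a \<and> y \<in> V b \<and> a + b = c'}" for w
    using that by (auto simp: f_def TV_projection_def tensor_lift_tensor[OF bilinear_pair_projection]
        pair_projection_homogeneous)
  ultimately have "f w = 0"
    using T.linear_vanishes_on_span assms unfolding tensor_grading_def by blast
  then show ?thesis by (simp add: f_def)
qed

lemma span_TV: "t \<in> T.span (\<Union>c. TV c)"
proof -
  have "tensor x y \<in> T.span (\<Union>c. TV c)" for x y
  proof -
    have "tensor x y = tensor (\<Sum>a\<in>{g. component g x \<noteq> 0}. component a x)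
        (\<Sum>b\<in>{g. component g y \<noteq> 0}. component b y)"
      by (simp only: sum_components)
    also have "\<dots> = (\<Sum>a\<in>{g. component g x \<noteq> 0}. \<Sum>b\<in>{g. component g y \<noteq> 0}.
        tensor (component a x) (component b y))"
      by (simp only: tensor_sum_left tensor_sum_right) (rule sum.swap)
    also have "\<dots> \<in> T.span (\<Union>c. TV c)"
      by (intro T.span_sum T.span_base) (auto intro: tensor_in_TV[OF component_in component_in])
    finally show ?thesis .
  qed
  then have "T.span {tensor x y | x y. True} \<subseteq> T.span (\<Union>c. TV c)"
    by (intro T.span_minimal) auto
  then show ?thesis using tensor_span by blast
qed

lemma graded_space_TV: "graded_space sT TV"
proof -
  interpret graded_projections sT TV TV_projection
  proof (rule graded_projections.intro[OF T.vector_space_axioms graded_projections_axioms.intro])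
    show "Vector_Spaces.linear sT sT (TV_projection c)" for c
      unfolding TV_projection_def by (rule linear_tensor_lift[OF bilinear_pair_projection])
    show "TV_projection c t \<in> TV c" for c t
      unfolding TV_projection_def tensor_lift_def induced_map_def
      by (intro T.subspace_sum[OF subspace_TV] T.subspace_scale[OF subspace_TV] pair_projection_in_TV)
  qed (simp_all add: subspace_TV TV_projection_on_TV span_TV)
  show ?thesis by (rule graded_space_W)
qed

end

section \<open>The bracket on the tensor square\<close>

locale ternary_tensor_square = graded_tensor_square sA V sT tensor
  for sA :: "'k::field \<Rightarrow> 'a::ab_group_add \<Rightarrow> 'a" and V :: "'g::ab_group_add \<Rightarrow> 'a set"
    and sT :: "'k \<Rightarrow> 't::ab_group_add \<Rightarrow> 't" and tensor +
  fixes \<epsilon> :: "'g \<Rightarrow> 'g \<Rightarrow> 'k" and tb :: "'a \<Rightarrow> 'a \<Rightarrow> 'a \<Rightarrow> 'a"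
  assumes ternary: "ternary_leibniz_color_algebra sA V \<epsilon> tb"
begin

lemma skew_bicharacter_eps: "skew_bicharacter \<epsilon>"
  using ternary by (simp add: ternary_leibniz_color_algebra_def)

lemma eps_swap: "\<epsilon> a b * \<epsilon> b a = 1"
  and eps_add_right: "\<epsilon> a (b + c) = \<epsilon> a b * \<epsilon> a c"
  and eps_add_left: "\<epsilon> (a + b) c = \<epsilon> a c * \<epsilon> b c"
  using skew_bicharacter_eps by (auto simp: skew_bicharacter_def)

lemma tb_in: "x \<in> V a \<Longrightarrow> y \<in> V b \<Longrightarrow> z \<in> V c \<Longrightarrow> tb x y z \<in> V (a + b + c)"
  using ternary by (simp add: ternary_leibniz_color_algebra_def)

lemma tb_leibniz:
  "x \<in> V a \<Longrightarrow> y \<in> V b \<Longrightarrow> z \<in> V c \<Longrightarrow> t \<in> V d \<Longrightarrow> u \<in> V e \<Longrightarrow>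
   tb (tb x y z) t u = tb x y (tb z t u) + sA (\<epsilon> c (d + e)) (tb x (tb y t u) z)
     + sA (\<epsilon> (b + c) (d + e)) (tb (tb x t u) y z)"
  using ternary unfolding ternary_leibniz_color_algebra_def by blast

lemma tb_add_left: "tb (x + x') y z = tb x y z + tb x' y z"
  and tb_add_mid: "tb x (y + y') z = tb x y z + tb x y' z"
  and tb_add_right: "tb x y (z + z') = tb x y z + tb x y z'"
  and tb_scale_left: "tb (sA c x) y z = sA c (tb x y z)"
  and tb_scale_mid: "tb x (sA c y) z = sA c (tb x y z)"
  and tb_scale_right: "tb x y (sA c z) = sA c (tb x y z)"
  using ternary unfolding ternary_leibniz_color_algebra_def trilinear_map_def Vector_Spaces.linear_iff
  by auto

lemma tb_zero_left: "tb 0 y z = 0" and tb_zero_mid: "tb x 0 z = 0" and tb_zero_right: "tb x y 0 = 0"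
  using tb_add_left[of 0 0 y z] tb_add_mid[of x 0 0 z] tb_add_right[of x y 0 0] by auto

definition twist :: "'g \<Rightarrow> 'a \<Rightarrow> 'a" where
  "twist e = degreewise (\<lambda>b y. sA (\<epsilon> b e) y)"

lemma twist_add: "twist e (y + y') = twist e y + twist e y'"
  unfolding twist_def by (rule degreewise_add) (simp add: A.scale_right_distrib)

lemma twist_scale: "twist e (sA c y) = sA c (twist e y)"
  unfolding twist_def
  by (rule degreewise_scale) (simp_all add: A.vector_space_axioms A.scale_left_commute)

lemma twist_homogeneous: "y \<in> V b \<Longrightarrow> twist e y = sA (\<epsilon> b e) y"
  unfolding twist_def by (rule degreewise_homogeneous) simp_all

text \<open>The formula of the theorem depends on the degrees of \<open>x'\<close>, \<open>y'\<close> and \<open>y\<close>; it is applied to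
  the homogeneous components of \<open>x'\<close> and \<open>y'\<close>, and \<open>twist\<close> supplies the sign for \<open>y\<close>.\<close>
definition pair_bracket :: "'a \<Rightarrow> 'a \<Rightarrow> 'a \<Rightarrow> 'a \<Rightarrow> 't" where
  "pair_bracket x y x' y' = degreewise (\<lambda>a' u. degreewise (\<lambda>b' v.
      tensor x (tb y u v) + tensor (tb x u v) (twist (a' + b') y)) y') x'"

lemma bilinear_pair_bracket_left: "bilinear_map sA sT (\<lambda>x y. pair_bracket x y x' y')"
  unfolding bilinear_map_iff[OF A.vector_space_axioms T.vector_space_axioms] pair_bracket_def
    degreewise_def
  by (simp add: tensor_add_left tensor_add_right tensor_scale_left tensor_scale_right tb_add_left tb_add_mid
      tb_scale_left tb_scale_mid twist_add twist_scale sum.distrib T.scale_sum_right T.scale_right_distrib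
      algebra_simps)

lemma bilinear_pair_bracket_right: "bilinear_map sA sT (pair_bracket x y)"
  unfolding pair_bracket_def[abs_def]
proof (rule bilinear_degreewise[OF T.vector_space_axioms])
  show "bilinear_map sA sT (\<lambda>u v. tensor x (tb y u v) + tensor (tb x u v) (twist (a' + b') y))" for a' b'
    unfolding bilinear_map_iff[OF A.vector_space_axioms T.vector_space_axioms]
    by (simp add: tensor_add_left tensor_add_right tensor_scale_left tensor_scale_right tb_add_mid tb_add_right
        tb_scale_mid tb_scale_right T.scale_right_distrib algebra_simps)
qed

lemma pair_bracket_homogeneous:
  assumes "x' \<in> V a'" "y' \<in> V b'" "y \<in> V b"
  shows "pair_bracket x y x' y' = tensor x (tb y x' y') + sT (\<epsilon> b (a' + b')) (tensor (tb x x' y') y)"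
proof -
  have "pair_bracket x y x' y' = degreewise (\<lambda>b' v. tensor x (tb y x' v) + tensor (tb x x' v) (twist (a' + b') y)) y'"
    unfolding pair_bracket_def
    by (rule degreewise_homogeneous[OF assms(1)])
       (simp add: tb_zero_mid tb_zero_left tensor_zero_left tensor_zero_right degreewise_def)
  also have "\<dots> = tensor x (tb y x' y') + tensor (tb x x' y') (twist (a' + b') y)"
    by (rule degreewise_homogeneous[OF assms(2)]) (simp add: tb_zero_right tb_zero_left tensor_zero_left tensor_zero_right)
  finally show ?thesis using assms(3) by (simp add: twist_homogeneous tensor_scale_right)
qed

definition bracket :: "'t \<Rightarrow> 't \<Rightarrow> 't" where
  "bracket t t' = tensor_lift (\<lambda>x' y'. tensor_lift (\<lambda>x y. pair_bracket x y x' y') t) t'"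

lemma bilinear_lift_pair_bracket: "bilinear_map sA sT (\<lambda>x' y'. tensor_lift (\<lambda>x y. pair_bracket x y x' y') t)"
  using bilinear_pair_bracket_right
  unfolding bilinear_map_iff[OF A.vector_space_axioms T.vector_space_axioms]
  by (simp add: tensor_lift_add_map tensor_lift_scale_map)

lemma bilinear_bracket: "bilinear_map sT sT bracket"
  unfolding bilinear_map_iff[OF T.vector_space_axioms T.vector_space_axioms] bracket_def
  by (simp add: tensor_lift_add tensor_lift_scale bilinear_pair_bracket_left bilinear_lift_pair_bracket
      tensor_lift_add_map tensor_lift_scale_map)

lemma bracket_add_left: "bracket (t1 + t2) t' = bracket t1 t' + bracket t2 t'"
  and bracket_add_right: "bracket t (t1 + t2) = bracket t t1 + bracket t t2"
  and bracket_scale_left: "bracket (sT c t) t' = sT c (bracket t t')"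
  and bracket_scale_right: "bracket t (sT c t') = sT c (bracket t t')"
  using bilinear_bracket
  unfolding bilinear_map_iff[OF T.vector_space_axioms T.vector_space_axioms] by blast+

lemma bracket_tensor: "bracket (tensor x y) (tensor x' y') = pair_bracket x y x' y'"
  unfolding bracket_def tensor_lift_tensor[OF bilinear_lift_pair_bracket]
  by (rule tensor_lift_tensor[OF bilinear_pair_bracket_left])

lemma bracket_tensor_homogeneous:
  "x' \<in> V a' \<Longrightarrow> y' \<in> V b' \<Longrightarrow> y \<in> V b \<Longrightarrow>
   bracket (tensor x y) (tensor x' y') = tensor x (tb y x' y') + sT (\<epsilon> b (a' + b')) (tensor (tb x x' y') y)"
  by (simp add: bracket_tensor pair_bracket_homogeneous)

lemma bracket_in_TV:
  assumes "X \<in> TV a" "Y \<in> TV b"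
  shows "bracket X Y \<in> TV (a + b)"
proof (rule T.bilinear_map_span_subspace[OF bilinear_bracket subspace_TV])
  fix X Y
  assume "X \<in> {tensor x y | x y a1 b1. x \<in> V a1 \<and> y \<in> V b1 \<and> a1 + b1 = a}"
    and "Y \<in> {tensor x y | x y a2 b2. x \<in> V a2 \<and> y \<in> V b2 \<and> a2 + b2 = b}"
  then obtain x y x' y' a1 b1 a2 b2 where X: "X = tensor x y" "x \<in> V a1" "y \<in> V b1" "a1 + b1 = a"
    and Y: "Y = tensor x' y'" "x' \<in> V a2" "y' \<in> V b2" "a2 + b2 = b"
    by blast
  have deg: "a + b = a1 + (b1 + a2 + b2)" "a + b = (a1 + a2 + b2) + b1"
    unfolding X(4)[symmetric] Y(4)[symmetric] by (simp_all add: ac_simps)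
  have "tensor x (tb y x' y') \<in> TV (a + b)"
    unfolding deg(1) by (rule tensor_in_TV[OF X(2) tb_in[OF X(3) Y(2,3)]])
  moreover have "tensor (tb x x' y') y \<in> TV (a + b)"
    unfolding deg(2) by (rule tensor_in_TV[OF tb_in[OF X(2) Y(2,3)] X(3)])
  ultimately show "bracket X Y \<in> TV (a + b)"
    unfolding X(1) Y(1) bracket_tensor_homogeneous[OF Y(2,3) X(3)]
    by (intro T.subspace_add[OF subspace_TV] T.subspace_scale[OF subspace_TV])
qed (use assms in \<open>simp_all add: tensor_grading_def\<close>)

lemma leibniz_signs:
  "\<epsilon> (b1 + a2 + b2) (a3 + b3) = \<epsilon> (a2 + b2) (a3 + b3) * \<epsilon> b1 (a3 + b3)"
  "\<epsilon> b1 (a2 + b2) = \<epsilon> (a2 + b2) (a3 + b3) * \<epsilon> (b1 + a3 + b3) (a2 + b2)"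
  "\<epsilon> b1 (a2 + (b2 + a3 + b3)) = \<epsilon> b1 (a2 + b2) * \<epsilon> b1 (a3 + b3)"
  "\<epsilon> b1 (a2 + a3 + b3 + b2) = \<epsilon> b1 (a2 + b2) * \<epsilon> b1 (a3 + b3)"
proof -
  show "\<epsilon> (b1 + a2 + b2) (a3 + b3) = \<epsilon> (a2 + b2) (a3 + b3) * \<epsilon> b1 (a3 + b3)"
    by (simp add: eps_add_left mult.commute flip: add.assoc)
  have "\<epsilon> (b1 + a3 + b3) (a2 + b2) = \<epsilon> b1 (a2 + b2) * \<epsilon> (a3 + b3) (a2 + b2)"
    by (simp add: eps_add_left flip: add.assoc)
  then show "\<epsilon> b1 (a2 + b2) = \<epsilon> (a2 + b2) (a3 + b3) * \<epsilon> (b1 + a3 + b3) (a2 + b2)"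
    using eps_swap[of "a2 + b2" "a3 + b3"] by (simp add: mult.assoc mult.left_commute)
  have "a2 + (b2 + a3 + b3) = (a2 + b2) + (a3 + b3)" "a2 + a3 + b3 + b2 = (a2 + b2) + (a3 + b3)"
    by (simp_all add: ac_simps)
  then show "\<epsilon> b1 (a2 + (b2 + a3 + b3)) = \<epsilon> b1 (a2 + b2) * \<epsilon> b1 (a3 + b3)"
    "\<epsilon> b1 (a2 + a3 + b3 + b2) = \<epsilon> b1 (a2 + b2) * \<epsilon> b1 (a3 + b3)"
    by (simp_all only: eps_add_right)
qed

lemma bracket_leibniz_tensors:
  assumes x: "x \<in> V a1" and y: "y \<in> V b1" and x': "x' \<in> V a2" and y': "y' \<in> V b2"
    and x'': "x'' \<in> V a3" and y'': "y'' \<in> V b3"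
  shows "bracket (bracket (tensor x y) (tensor x' y')) (tensor x'' y'')
     = bracket (tensor x y) (bracket (tensor x' y') (tensor x'' y''))
       + sT (\<epsilon> (a2 + b2) (a3 + b3)) (bracket (bracket (tensor x y) (tensor x'' y'')) (tensor x' y'))"
proof -
  define T1 where "T1 = tensor x (tb y x' (tb y' x'' y''))"
  define T2 where "T2 = tensor x (tb y (tb x' x'' y'') y')"
  define T3 where "T3 = tensor x (tb (tb y x'' y'') x' y')"
  define T4 where "T4 = tensor (tb x x'' y'') (tb y x' y')"
  define T5 where "T5 = tensor (tb x x' y') (tb y x'' y'')"
  define T6 where "T6 = tensor (tb x x' (tb y' x'' y'')) y"
  define T7 where "T7 = tensor (tb x (tb x' x'' y'') y') y"
  define T8 where "T8 = tensor (tb (tb x x'' y'') x' y') y"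
  note T_defs = T1_def T2_def T3_def T4_def T5_def T6_def T7_def T8_def
  note bracket_linear = bracket_add_left bracket_add_right bracket_scale_left bracket_scale_right
  have lhs: "bracket (bracket (tensor x y) (tensor x' y')) (tensor x'' y'')
      = (T1 + sT (\<epsilon> b2 (a3 + b3)) T2 + sT (\<epsilon> (a2 + b2) (a3 + b3)) T3)
        + sT (\<epsilon> (b1 + a2 + b2) (a3 + b3)) T4
        + sT (\<epsilon> b1 (a2 + b2)) (T5 + sT (\<epsilon> b1 (a3 + b3))
            (T6 + sT (\<epsilon> b2 (a3 + b3)) T7 + sT (\<epsilon> (a2 + b2) (a3 + b3)) T8))"
    unfolding bracket_tensor_homogeneous[OF x' y' y] bracket_linear
      bracket_tensor_homogeneous[OF x'' y'' tb_in[OF y x' y']] bracket_tensor_homogeneous[OF x'' y'' y]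
      tb_leibniz[OF x x' y' x'' y''] tb_leibniz[OF y x' y' x'' y''] T_defs
    by (simp only: tensor_add_left tensor_add_right tensor_scale_left tensor_scale_right)
  have rhs: "bracket (tensor x y) (bracket (tensor x' y') (tensor x'' y''))
       + sT (\<epsilon> (a2 + b2) (a3 + b3)) (bracket (bracket (tensor x y) (tensor x'' y'')) (tensor x' y'))
     = ((T1 + sT (\<epsilon> b1 (a2 + (b2 + a3 + b3))) T6)
         + sT (\<epsilon> b2 (a3 + b3)) (T2 + sT (\<epsilon> b1 (a2 + a3 + b3 + b2)) T7))
       + sT (\<epsilon> (a2 + b2) (a3 + b3)) ((T3 + sT (\<epsilon> (b1 + a3 + b3) (a2 + b2)) T5)
         + sT (\<epsilon> b1 (a3 + b3)) (T4 + sT (\<epsilon> b1 (a2 + b2)) T8))"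
    unfolding bracket_tensor_homogeneous[OF x'' y'' y'] bracket_tensor_homogeneous[OF x'' y'' y]
      bracket_linear bracket_tensor_homogeneous[OF x' tb_in[OF y' x'' y''] y]
      bracket_tensor_homogeneous[OF tb_in[OF x' x'' y''] y' y]
      bracket_tensor_homogeneous[OF x' y' tb_in[OF y x'' y'']] bracket_tensor_homogeneous[OF x' y' y]
      T_defs ..
  show ?thesis
    unfolding lhs rhs leibniz_signs by (simp add: T.scale_right_distrib algebra_simps eps_swap)
qed

lemma bracket_leibniz:
  assumes "X \<in> TV a" "Y \<in> TV b" "Z \<in> TV c"
  shows "bracket (bracket X Y) Z = bracket X (bracket Y Z) + sT (\<epsilon> b c) (bracket (bracket X Z) Y)"
proof -
  define F where "F X Y Z =
    bracket (bracket X Y) Z - bracket X (bracket Y Z) - sT (\<epsilon> b c) (bracket (bracket X Z) Y)" for X Y Z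
  note bracket_linear = bracket_add_left bracket_add_right bracket_scale_left bracket_scale_right
    T.scale_right_distrib T.scale_right_diff_distrib
  have "F (X + X') Y Z = F X Y Z + F X' Y Z" "F X (Y + Y') Z = F X Y Z + F X Y' Z"
    "F X Y (Z + Z') = F X Y Z + F X Y Z'" for X X' Y Y' Z Z'
    unfolding F_def bracket_linear by (simp_all add: algebra_simps)
  moreover have "F (sT k X) Y Z = sT k (F X Y Z)" "F X (sT k Y) Z = sT k (F X Y Z)"
    "F X Y (sT k Z) = sT k (F X Y Z)" for k X Y Z
    unfolding F_def bracket_linear by (simp_all add: T.scale_scale mult.commute)
  ultimately have "trilinear_map sT F"
    unfolding trilinear_map_def Vector_Spaces.linear_iff by (simp add: T.vector_space_axioms)
  moreover have "F X Y Z = 0"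
    if "X \<in> {tensor x y | x y a1 b1. x \<in> V a1 \<and> y \<in> V b1 \<and> a1 + b1 = a}"
      "Y \<in> {tensor x y | x y a2 b2. x \<in> V a2 \<and> y \<in> V b2 \<and> a2 + b2 = b}"
      "Z \<in> {tensor x y | x y a3 b3. x \<in> V a3 \<and> y \<in> V b3 \<and> a3 + b3 = c}" for X Y Z
  proof -
    from that obtain x y x' y' x'' y'' a1 b1 a2 b2 a3 b3
      where "X = tensor x y" "x \<in> V a1" "y \<in> V b1"
        and "Y = tensor x' y'" "x' \<in> V a2" "y' \<in> V b2" "a2 + b2 = b"
        and "Z = tensor x'' y''" "x'' \<in> V a3" "y'' \<in> V b3" "a3 + b3 = c"
      by blast
    then show ?thesis
      using bracket_leibniz_tensors[of x a1 y b1 x' a2 y' b2 x'' a3 y'' b3] by (simp add: F_def)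
  qed
  ultimately have "F X Y Z = 0"
    by (rule T.trilinear_eq_0_on_span) (use assms in \<open>simp_all add: tensor_grading_def\<close>)
  then show ?thesis unfolding F_def by (simp add: algebra_simps)
qed

lemma leibniz_color_algebra_bracket: "leibniz_color_algebra sT TV \<epsilon> bracket"
  unfolding leibniz_color_algebra_def
  using graded_space_TV skew_bicharacter_eps bilinear_bracket bracket_in_TV bracket_leibniz by blast

end

theorem mainTheorem11:
  fixes sA :: "'k::field \<Rightarrow> 'a::ab_group_add \<Rightarrow> 'a"
    and V :: "'g::ab_group_add \<Rightarrow> 'a set"
    and \<epsilon> :: "'g \<Rightarrow> 'g \<Rightarrow> 'k"
    and tb :: "'a \<Rightarrow> 'a \<Rightarrow> 'a \<Rightarrow> 'a"
    and sT :: "'k \<Rightarrow> 't::ab_group_add \<Rightarrow> 't"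
    and tensor :: "'a \<Rightarrow> 'a \<Rightarrow> 't"
  assumes char: "(2::'k) \<noteq> 0"
    and A: "ternary_leibniz_color_algebra sA V \<epsilon> tb"
    and T: "is_tensor_square sA sT tensor"
  shows "\<exists>br. bilinear_map sT sT br
      \<and> (\<forall>a b a' b' x y x' y'. x \<in> V a \<longrightarrow> y \<in> V b \<longrightarrow> x' \<in> V a' \<longrightarrow> y' \<in> V b' \<longrightarrow>
           br (tensor x y) (tensor x' y')
             = tensor x (tb y x' y') + sT (\<epsilon> b (a' + b')) (tensor (tb x x' y') y))
      \<and> leibniz_color_algebra sT (tensor_grading sT tensor V) \<epsilon> br"
proof -
  interpret ternary_tensor_square sA V sT tensor \<epsilon> tb
  proof
    show "graded_space sA V" using A by (simp add: ternary_leibniz_color_algebra_def)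
  qed (fact T A)+
  show ?thesis
    using bilinear_bracket bracket_tensor_homogeneous leibniz_color_algebra_bracket by blast
qed

end
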